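(* Let $q$ be a prime power and $n$ a positive integer. Let $g, h\in \mathbb{F}_q[x]$, where $g(x)$ is a monic divisor of $x^n-1$, and let $f, k\in\mathbb{F}_{q^n}[x]$ be such that $k(L_g(\mathbb{F}_{q^n}))\subseteq \mathbb{F}_q^*$. Let $P(x)=f(L_g(x))+k(L_g(x))\cdot L_h(x)$. Then $P$ is a permutation polynomial of $\mathbb{F}_{q^n}$ if and only if both of the following hold: (i) $\gcd(g, h)=1$; (ii) the polynomial $Q(x)=L_g(f(x))+k(x)\cdot L_h(x)$ induces a permutation of the set $L_g(\mathbb{F}_{q^n})=\{L_g(c):c\in\mathbb{F}_{q^n}\}$.
   Context: For a polynomial $u(x)=\sum_{i=0}^m a_i x^i\in\mathbb{F}_q[x]$, its linearized $q$-associate is $L_u(x)=\sum_{i=0}^m a_i x^{q^i}$. A polynomial $P\in\mathbb{F}_{q^n}[x]$ is a permutation polynomial of $\mathbb{F}_{q^n}$ if $c\mapsto P(c)$ is a bijection of $\mathbb{F}_{q^n}$. *)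

theory Defs
  imports "HOL-Computational_Algebra.Computational_Algebra"
begin

text \<open>The prime subfield-type setup: the ambient finite field type 'a plays the role of
  F_{q^n}; the subfield F_q is the set of fixed points of the q-th power map.\<close>

definition subfield_q :: "nat \<Rightarrow> 'a::{field,finite} set" where
  "subfield_q q = {c. c ^ q = c}"

definition prime_power :: "nat \<Rightarrow> bool" where
  "prime_power q \<longleftrightarrow> (\<exists>p k. prime p \<and> k > 0 \<and> q = p ^ k)"

definition lin_assoc :: "nat \<Rightarrow> 'a::comm_ring_1 poly \<Rightarrow> 'a \<Rightarrow> 'a" where
  "lin_assoc q u x = (\<Sum>i\<le>degree u. coeff u i * x ^ (q ^ i))"

definition poly_over :: "'a::zero set \<Rightarrow> 'a poly \<Rightarrow> bool" where
  "poly_over S u \<longleftrightarrow> (\<forall>i. coeff u i \<in> S)"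

definition perm_poly :: "('a \<Rightarrow> 'a) \<Rightarrow> bool" where
  "perm_poly P \<longleftrightarrow> bij P"

end

theory Submission
  imports Defs
begin

text \<open>
  Since \<open>g\<close> and \<open>h\<close> have coefficients in \<open>F\<^sub>q\<close>, the maps \<open>L\<^sub>g\<close> and \<open>L\<^sub>h\<close> are
  \<open>F\<^sub>q\<close>-linear and commute; in general \<open>L\<^sub>u\<^sub>v = L\<^sub>u \<circ> L\<^sub>v\<close> whenever \<open>v\<close> has coefficients
  in \<open>F\<^sub>q\<close>. As \<open>k(L\<^sub>g(c))\<close> lies in \<open>F\<^sub>q\<close>, this gives
  \<open>L\<^sub>g(P(c)) = Q(L\<^sub>g(c))\<close>. So \<open>P(x) = P(y)\<close> forces \<open>L\<^sub>g(x) = L\<^sub>g(y)\<close> when \<open>Q\<close> is injective on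
  the image of \<open>L\<^sub>g\<close>, and then \<open>L\<^sub>h(x) = L\<^sub>h(y)\<close>; hence \<open>P\<close> is a permutation iff \<open>Q\<close>
  permutes the image of \<open>L\<^sub>g\<close> and the kernels of \<open>L\<^sub>g\<close> and \<open>L\<^sub>h\<close> meet only in \<open>0\<close>.

  The kernels meet trivially iff \<open>gcd(g, h) = 1\<close>. One direction is Bezout's identity. For the
  other, \<open>d = gcd(g, h)\<close> again has coefficients in \<open>F\<^sub>q\<close> and \<open>x\<^sup>n - 1 = d e\<close>; since
  \<open>c\<^bsup>q\<^sup>n\<^esup> = c\<close> on the field, \<open>L\<^sub>e \<circ> L\<^sub>d = 0\<close>. The image of \<open>L\<^sub>d\<close> thus lies among the at most
  \<open>q\<^bsup>deg e\<^esup> < q\<^sup>n\<close> roots of \<open>L\<^sub>e\<close>, so \<open>L\<^sub>d\<close> is not injective and has a nonzero root,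
  which is a common root of \<open>L\<^sub>g\<close> and \<open>L\<^sub>h\<close>.
\<close>

section \<open>Finite fields\<close>

lemma prime_CHAR_finite_field: "prime CHAR('a::{field,finite})"
  by (rule prime_CHAR_semidom[OF finite_imp_CHAR_pos]) simp

lemma of_nat_card_UNIV_eq_0: "of_nat (card (UNIV :: 'a::{ring_1,finite} set)) = (0::'a)"
proof -
  have "(\<Sum>x\<in>UNIV. x) = (\<Sum>x\<in>UNIV. x + (1::'a))"
    by (rule sum.reindex_bij_witness[of _ "\<lambda>x. x + 1" "\<lambda>x. x - 1"]) auto
  then show ?thesis
    by (simp add: sum.distrib)
qed

lemma prime_power_card_imp_power_of_CHAR:
  assumes "prime_power q" and "card (UNIV :: 'a::{field,finite} set) = q ^ n"
  shows "\<exists>m>0. q = CHAR('a) ^ m"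
proof -
  obtain p k where p: "prime p" and k: "k > 0" and q: "q = p ^ k"
    using assms(1) unfolding prime_power_def by blast
  have "CHAR('a) dvd card (UNIV :: 'a set)"
    using of_nat_card_UNIV_eq_0 of_nat_eq_0_iff_char_dvd by blast
  then have "CHAR('a) dvd p ^ (k * n)"
    using assms(2) q by (simp add: power_mult)
  then have "CHAR('a) dvd p"
    using prime_CHAR_finite_field prime_dvd_power by blast
  then have "CHAR('a) = p"
    using prime_CHAR_finite_field p primes_dvd_imp_eq by blast
  with k q show ?thesis by blast
qed

text \<open>The library's \<open>finite_field_power_card_eq_same\<close> is stated for the type class
  \<open>finite_field\<close>, which the sort \<open>{field, finite}\<close> used here is not known to belong to.\<close>

lemma power_card_UNIV_eq_self:
  fixes x :: "'a::{field,finite}"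
  shows "x ^ card (UNIV :: 'a set) = x"
proof (cases "x = 0")
  case True
  then show ?thesis using finite_UNIV_card_ge_0[where 'a = 'a] by simp
next
  case False
  define N where "N = UNIV - {0::'a}"
  have "bij_betw ((*) x) N N"
    by (rule bij_betw_byWitness[where f' = "\<lambda>y. y / x"]) (use False in \<open>auto simp: N_def\<close>)
  then have "\<Prod>N = (\<Prod>y\<in>N. x * y)"
    using prod.reindex_bij_betw[of "(*) x" N N id] by simp
  also have "\<dots> = x ^ card N * \<Prod>N"
    by (simp add: prod.distrib)
  finally have "x ^ card N = 1"
    by (simp add: N_def)
  moreover have "card (UNIV :: 'a set) = Suc (card N)"
    using finite_UNIV_card_ge_0[where 'a = 'a] by (simp add: N_def card_Diff_singleton)
  ultimately show ?thesis by simp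
qed

section \<open>Linearized associates\<close>

lemma lin_assoc_eq_sum_lessThan:
  assumes "degree u < N"
  shows "lin_assoc q u x = (\<Sum>i<N. coeff u i * x ^ (q ^ i))"
  unfolding lin_assoc_def
  by (rule sum.mono_neutral_left) (use assms in \<open>auto simp: coeff_eq_0\<close>)

lemma lin_assoc_0 [simp]: "lin_assoc q 0 x = 0"
  by (simp add: lin_assoc_def)

lemma lin_assoc_pCons: "lin_assoc q (pCons a u) x = a * x + lin_assoc q u (x ^ q)"
proof -
  have "lin_assoc q (pCons a u) x = (\<Sum>i<Suc (Suc (degree u)). coeff (pCons a u) i * x ^ (q ^ i))"
    by (rule lin_assoc_eq_sum_lessThan) (metis degree_pCons_le le_imp_less_Suc)
  also have "\<dots> = a * x + (\<Sum>i<Suc (degree u). coeff u i * (x ^ q) ^ (q ^ i))"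
    by (subst sum.lessThan_Suc_shift) (simp add: power_mult)
  also have "(\<Sum>i<Suc (degree u). coeff u i * (x ^ q) ^ (q ^ i)) = lin_assoc q u (x ^ q)"
    by (rule lin_assoc_eq_sum_lessThan[symmetric]) simp
  finally show ?thesis .
qed

lemma lin_assoc_1 [simp]: "lin_assoc q 1 x = x"
  by (simp add: one_pCons lin_assoc_pCons)

lemma lin_assoc_monom: "lin_assoc q (monom c n) x = c * x ^ (q ^ n)"
  by (induct n arbitrary: x)
    (simp_all add: monom_0 monom_Suc lin_assoc_pCons mult.commute flip: power_mult)

lemma lin_assoc_add: "lin_assoc q (u + v) x = lin_assoc q u x + lin_assoc q v x"
proof (induct u arbitrary: v x)
  case (pCons a u)
  obtain b w where "v = pCons b w" by (cases v)
  with pCons(2)[of w "x ^ q"] show ?case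
    by (simp add: lin_assoc_pCons algebra_simps)
qed simp

lemma lin_assoc_diff: "lin_assoc q (u - v) x = lin_assoc q u x - lin_assoc q v x"
  using lin_assoc_add[of q "u - v" v x] by simp

lemma lin_assoc_smult: "lin_assoc q (smult c u) x = c * lin_assoc q u x"
  by (induct u arbitrary: x) (simp_all add: lin_assoc_pCons algebra_simps)

lemma lin_assoc_at_0:
  assumes "q > 0"
  shows "lin_assoc q u 0 = 0"
  using assms by (induct u) (simp_all add: lin_assoc_pCons power_0_left)

lemma lin_assoc_mult_fixed_arg:
  assumes "c ^ q = c"
  shows "lin_assoc q u (c * x) = c * lin_assoc q u x"
proof (induct u arbitrary: x)
  case (pCons a u)
  have "lin_assoc q u ((c * x) ^ q) = c * lin_assoc q u (x ^ q)"
    using pCons(2)[of "x ^ q"] assms by (simp add: power_mult_distrib)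
  then show ?case
    by (simp add: lin_assoc_pCons algebra_simps)
qed simp

lemma lin_assoc_add_arg:
  fixes x y :: "'a::comm_ring_1"
  assumes "prime CHAR('a)" and "q = CHAR('a) ^ m"
  shows "lin_assoc q u (x + y) = lin_assoc q u x + lin_assoc q u y"
  by (induct u arbitrary: x y) (simp_all add: lin_assoc_pCons freshmans_dream'[OF assms] algebra_simps)

lemma lin_assoc_diff_arg:
  fixes x y :: "'a::comm_ring_1"
  assumes "prime CHAR('a)" and "q = CHAR('a) ^ m"
  shows "lin_assoc q u (x - y) = lin_assoc q u x - lin_assoc q u y"
  using lin_assoc_add_arg[OF assms, of u "x - y" y] by simp

lemma poly_over_subfield_q_pCons_iff:
  "poly_over (subfield_q q) (pCons a v) \<longleftrightarrow> a ^ q = a \<and> poly_over (subfield_q q) (v :: 'a::{field,finite} poly)"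
  unfolding poly_over_def subfield_q_def
  by (auto simp: coeff_pCons split: nat.splits)

lemma lin_assoc_power:
  fixes v :: "'a::{field,finite} poly"
  assumes q: "q = CHAR('a) ^ m" and v: "poly_over (subfield_q q) v"
  shows "lin_assoc q v x ^ q = lin_assoc q v (x ^ q)"
  using v
proof (induct v arbitrary: x)
  case 0
  have "q > 0"
    using q by (simp add: finite_imp_CHAR_pos)
  then show ?case by simp
next
  case (pCons a v)
  then show ?case
    by (simp add: lin_assoc_pCons poly_over_subfield_q_pCons_iff power_mult_distrib
        freshmans_dream'[OF prime_CHAR_finite_field q])
qed

lemma lin_assoc_mult:
  fixes u v :: "'a::{field,finite} poly"
  assumes "q = CHAR('a) ^ m" and "poly_over (subfield_q q) v"
  shows "lin_assoc q (u * v) x = lin_assoc q u (lin_assoc q v x)"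
  by (induct u arbitrary: x)
    (simp_all add: lin_assoc_add lin_assoc_smult lin_assoc_pCons lin_assoc_power[OF assms])

lemma lin_assoc_commute:
  fixes g h :: "'a::{field,finite} poly"
  assumes "q = CHAR('a) ^ m" and "poly_over (subfield_q q) g" and "poly_over (subfield_q q) h"
  shows "lin_assoc q g (lin_assoc q h x) = lin_assoc q h (lin_assoc q g x)"
  using lin_assoc_mult[OF assms(1,2), of h x] lin_assoc_mult[OF assms(1,3), of g x]
  by (simp add: mult.commute)

section \<open>Coprimality and common roots\<close>

lemma map_poly_power_CHAR_mult:
  fixes u v :: "'a::comm_ring_1 poly"
  assumes "prime CHAR('a)" and "q = CHAR('a) ^ m"
  shows "map_poly (\<lambda>c. c ^ q) (u * v) = map_poly (\<lambda>c. c ^ q) u * map_poly (\<lambda>c. c ^ q) v"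
proof (rule poly_eqI)
  fix n
  have "q > 0"
    using assms prime_gt_0_nat by simp
  then show "coeff (map_poly (\<lambda>c. c ^ q) (u * v)) n
      = coeff (map_poly (\<lambda>c. c ^ q) u * map_poly (\<lambda>c. c ^ q) v) n"
    by (simp add: coeff_map_poly coeff_mult power_0_left power_mult_distrib
        freshmans_dream_sum'[OF assms])
qed

lemma poly_over_subfield_q_iff:
  assumes "q > 0"
  shows "poly_over (subfield_q q) u \<longleftrightarrow> map_poly (\<lambda>c. c ^ q) u = (u :: 'a::{field,finite} poly)"
  unfolding poly_over_def subfield_q_def
  using assms by (auto simp: poly_eq_iff coeff_map_poly)

lemma lead_coeff_gcd_poly:
  fixes g h :: "'a::field_gcd poly"
  assumes "gcd g h \<noteq> 0"
  shows "lead_coeff (gcd g h) = 1"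
proof -
  have "unit_factor (gcd g h) = 1"
    using assms by (simp add: unit_factor_gcd)
  then have "unit_factor (lead_coeff (gcd g h)) = 1"
    by (simp add: unit_factor_poly_def one_pCons)
  moreover have "normalize (lead_coeff (gcd g h)) = 1"
    using assms by (simp add: is_unit_normalize dvd_field_iff)
  ultimately show ?thesis
    using unit_factor_mult_normalize[of "lead_coeff (gcd g h)"] by simp
qed

lemma dvd_imp_eq_if_degree_lead_coeff_eq:
  fixes p d :: "'a::idom poly"
  assumes "p dvd d" and "d \<noteq> 0" and "degree p = degree d" and "lead_coeff p = lead_coeff d"
  shows "p = d"
proof -
  from \<open>p dvd d\<close> obtain c where c: "d = p * c" ..
  with \<open>d \<noteq> 0\<close> have "p \<noteq> 0" and "c \<noteq> 0"
    by auto
  then have "degree c = 0"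
    using c \<open>degree p = degree d\<close> by (simp add: degree_mult_eq)
  moreover have "lead_coeff c = 1"
    using c \<open>lead_coeff p = lead_coeff d\<close> \<open>p \<noteq> 0\<close> by (simp add: lead_coeff_mult)
  ultimately have "c = 1"
    by (metis degree_0_id one_pCons)
  with c show ?thesis
    by simp
qed

lemma poly_over_subfield_q_gcd:
  fixes g h :: "'a::{field_gcd,finite} poly"
  assumes q: "q = CHAR('a) ^ m"
    and g: "poly_over (subfield_q q) g" and h: "poly_over (subfield_q q) h"
  shows "poly_over (subfield_q q) (gcd g h)"
proof -
  define \<sigma> where "\<sigma> = map_poly (\<lambda>c::'a. c ^ q)"
  define d where "d = gcd g h"
  have "q > 0"
    using q by (simp add: finite_imp_CHAR_pos)
  have \<sigma>_dvd: "\<sigma> d dvd \<sigma> p" if "d dvd p" for p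
    using that map_poly_power_CHAR_mult[OF prime_CHAR_finite_field q]
    unfolding \<sigma>_def by (metis dvd_def)
  have "\<sigma> d = d"
  proof (cases "d = 0")
    case False
    have "\<sigma> g = g" and "\<sigma> h = h"
      using g h poly_over_subfield_q_iff[OF \<open>q > 0\<close>] unfolding \<sigma>_def by auto
    then have "\<sigma> d dvd d"
      using \<sigma>_dvd[of g] \<sigma>_dvd[of h] unfolding d_def by (simp add: gcd_greatest)
    moreover have "lead_coeff d = 1"
      using False lead_coeff_gcd_poly unfolding d_def by blast
    moreover have "degree (\<sigma> d) = degree d"
      unfolding \<sigma>_def using \<open>q > 0\<close> by (intro degree_map_poly) simp
    ultimately show ?thesis
      using False \<open>q > 0\<close>
      by (intro dvd_imp_eq_if_degree_lead_coeff_eq) (simp_all add: \<sigma>_def coeff_map_poly)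
  qed (simp add: \<sigma>_def)
  then show ?thesis
    using poly_over_subfield_q_iff[OF \<open>q > 0\<close>] unfolding \<sigma>_def d_def by blast
qed

lemma degree_monom_1_minus_1:
  assumes "n > 0"
  shows "degree (monom 1 n - 1 :: 'a::comm_ring_1 poly) = n"
  using assms degree_add_eq_left[of "- 1" "monom 1 n :: 'a poly"] by (simp add: degree_monom_eq)

lemma card_lin_assoc_roots_le:
  fixes e :: "'a::idom poly"
  assumes q: "q > 1" and e: "e \<noteq> 0"
  shows "card {y. lin_assoc q e y = 0} \<le> q ^ degree e"
proof -
  define D where "D = degree e"
  define P where "P = (\<Sum>i\<le>D. monom (coeff e i) (q ^ i))"
  have poly_P: "poly P y = lin_assoc q e y" for y
    by (simp add: P_def D_def poly_sum poly_monom lin_assoc_def)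
  have "coeff P (q ^ D) = (\<Sum>i\<le>D. if i = D then coeff e i else 0)"
    unfolding P_def coeff_sum coeff_monom using q by (intro sum.cong) auto
  then have "P \<noteq> 0"
    using e by (auto simp: D_def)
  have "degree P \<le> q ^ D"
    unfolding P_def
    by (rule degree_sum_le) (use q in \<open>auto intro: order.trans[OF degree_monom_le] power_increasing\<close>)
  have "card {y. lin_assoc q e y = 0} = card {y. poly P y = 0}"
    by (simp add: poly_P)
  also have "\<dots> \<le> degree P"
    by (rule card_poly_roots_bound[OF \<open>P \<noteq> 0\<close>])
  also have "\<dots> \<le> q ^ degree e"
    using \<open>degree P \<le> q ^ D\<close> by (simp add: D_def)
  finally show ?thesis .
qed

lemma lin_assoc_has_nonzero_root:
  fixes d :: "'a::{field,finite} poly"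
  assumes q: "q = CHAR('a) ^ m" and "m > 0" and card: "card (UNIV :: 'a set) = q ^ n"
    and "n > 0" and d: "poly_over (subfield_q q) d" and "degree d > 0"
    and "d dvd monom 1 n - 1"
  shows "\<exists>z. z \<noteq> 0 \<and> lin_assoc q d z = 0"
proof -
  have "q > 1"
    using q \<open>m > 0\<close> prime_gt_1_nat[OF prime_CHAR_finite_field[where 'a = 'a]]
      one_less_power[of "CHAR('a)" m] by simp
  obtain e where de: "monom 1 n - 1 = d * e"
    using \<open>d dvd monom 1 n - 1\<close> ..
  have "degree (d * e) = n"
    using de degree_monom_1_minus_1[where 'a = 'a, OF \<open>n > 0\<close>] by simp
  then have "e \<noteq> 0"
    using \<open>n > 0\<close> by auto
  then have "degree e < n"
    using \<open>degree (d * e) = n\<close> \<open>degree d > 0\<close> degree_mult_eq[of d e] by fastforce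
  have "lin_assoc q e (lin_assoc q d x) = 0" for x
  proof -
    have "lin_assoc q e (lin_assoc q d x) = lin_assoc q (monom 1 n - 1) x"
      by (simp add: de mult.commute[of d] lin_assoc_mult[OF q d])
    also have "\<dots> = x ^ card (UNIV :: 'a set) - x"
      by (simp add: card lin_assoc_diff lin_assoc_monom)
    finally show ?thesis
      by (simp add: power_card_UNIV_eq_self)
  qed
  then have "card (range (lin_assoc q d)) \<le> card {y. lin_assoc q e y = 0}"
    by (intro card_mono) auto
  also have "\<dots> \<le> q ^ degree e"
    by (rule card_lin_assoc_roots_le[OF \<open>q > 1\<close> \<open>e \<noteq> 0\<close>])
  also have "\<dots> < card (UNIV :: 'a set)"
    using \<open>q > 1\<close> \<open>degree e < n\<close> card by (simp add: power_strict_increasing)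
  finally have "\<not> inj (lin_assoc q d)"
    using finite_UNIV_inj_surj[of "lin_assoc q d"] by fastforce
  then obtain x y where "x \<noteq> y" and "lin_assoc q d x = lin_assoc q d y"
    unfolding inj_def by blast
  then show ?thesis
    by (intro exI[of _ "x - y"]) (simp add: lin_assoc_diff_arg[OF prime_CHAR_finite_field q])
qed

lemma lin_assoc_eq_0_if_dvd:
  fixes d u :: "'a::{field,finite} poly"
  assumes q: "q = CHAR('a) ^ m" and d: "poly_over (subfield_q q) d"
    and "d dvd u" and "lin_assoc q d z = 0"
  shows "lin_assoc q u z = 0"
proof -
  from \<open>d dvd u\<close> obtain w where "u = d * w" ..
  then have "lin_assoc q u z = lin_assoc q w (lin_assoc q d z)"
    by (simp add: mult.commute[of d] lin_assoc_mult[OF q d])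
  then show ?thesis
    using \<open>lin_assoc q d z = 0\<close> q by (simp add: lin_assoc_at_0 finite_imp_CHAR_pos)
qed

lemma lin_assoc_common_root_eq_0:
  fixes g h :: "'a::{field_gcd,finite} poly"
  assumes q: "q = CHAR('a) ^ m" and g: "poly_over (subfield_q q) g" and h: "poly_over (subfield_q q) h"
    and "gcd g h = 1" and "lin_assoc q g z = 0" and "lin_assoc q h z = 0"
  shows "z = 0"
proof -
  define a b where "a = fst (bezout_coefficients g h)" and "b = snd (bezout_coefficients g h)"
  have "a * g + b * h = 1"
    using bezout_coefficients_fst_snd[of g h] \<open>gcd g h = 1\<close> by (simp add: a_def b_def)
  then have "z = lin_assoc q (a * g + b * h) z"
    by simp
  also have "\<dots> = 0"
    using lin_assoc_eq_0_if_dvd[OF q g _ \<open>lin_assoc q g z = 0\<close>, of "a * g"]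
      lin_assoc_eq_0_if_dvd[OF q h _ \<open>lin_assoc q h z = 0\<close>, of "b * h"]
    by (simp add: lin_assoc_add)
  finally show ?thesis .
qed

lemma gcd_eq_1_iff_lin_assoc_no_common_root:
  fixes g h :: "'a::{field_gcd,finite} poly"
  assumes q: "q = CHAR('a) ^ m" and "m > 0" and card: "card (UNIV :: 'a set) = q ^ n"
    and "n > 0" and g: "poly_over (subfield_q q) g" and h: "poly_over (subfield_q q) h"
    and "g dvd monom 1 n - 1"
  shows "gcd g h = 1 \<longleftrightarrow> (\<forall>z. lin_assoc q g z = 0 \<and> lin_assoc q h z = 0 \<longrightarrow> z = 0)"
proof (intro iffI allI impI)
  show "z = 0" if "gcd g h = 1" and "lin_assoc q g z = 0 \<and> lin_assoc q h z = 0" for z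
    using that by (auto intro: lin_assoc_common_root_eq_0[OF q g h])
next
  assume no_common_root: "\<forall>z. lin_assoc q g z = 0 \<and> lin_assoc q h z = 0 \<longrightarrow> z = 0"
  define d where "d = gcd g h"
  have d: "poly_over (subfield_q q) d"
    unfolding d_def by (rule poly_over_subfield_q_gcd[OF q g h])
  have "d dvd monom 1 n - 1"
    unfolding d_def using \<open>g dvd monom 1 n - 1\<close> by (rule dvd_trans[OF gcd_dvd1])
  moreover have "monom 1 n - 1 \<noteq> (0 :: 'a poly)"
    using degree_monom_1_minus_1[where 'a = 'a, OF \<open>n > 0\<close>] \<open>n > 0\<close> by auto
  ultimately have "d \<noteq> 0"
    by auto
  show "gcd g h = 1"
  proof (rule ccontr)
    assume "gcd g h \<noteq> 1"
    then have "\<not> is_unit d"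
      by (simp add: d_def coprime_iff_gcd_eq_1)
    then have "degree d > 0"
      using \<open>d \<noteq> 0\<close> by (simp add: is_unit_iff_degree)
    then obtain z where "z \<noteq> 0" and "lin_assoc q d z = 0"
      using lin_assoc_has_nonzero_root[OF q \<open>m > 0\<close> card \<open>n > 0\<close> d]
        \<open>d dvd monom 1 n - 1\<close> by blast
    moreover have "lin_assoc q g z = 0" and "lin_assoc q h z = 0"
      using lin_assoc_eq_0_if_dvd[OF q d _ \<open>lin_assoc q d z = 0\<close>] by (simp_all add: d_def)
    ultimately show False
      using no_common_root by blast
  qed
qed

section \<open>A permutation criterion\<close>

lemma bij_iff_trivial_common_kernel_and_bij_betw_range:
  fixes L H Q f k :: "'a::{field,finite} \<Rightarrow> 'a"
  assumes L: "\<And>x y. L (x - y) = L x - L y" and H: "\<And>x y. H (x - y) = H x - H y"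
    and k: "\<And>c. k (L c) \<noteq> 0"
    and semiconj: "\<And>c. L (f (L c) + k (L c) * H c) = Q (L c)"
  shows "bij (\<lambda>c. f (L c) + k (L c) * H c)
    \<longleftrightarrow> (\<forall>z. L z = 0 \<and> H z = 0 \<longrightarrow> z = 0) \<and> bij_betw Q (range L) (range L)"
    (is "bij ?P \<longleftrightarrow> ?kernel \<and> _")
proof
  assume "bij ?P"
  have "?kernel"
  proof (intro allI impI)
    fix z
    assume "L z = 0 \<and> H z = 0"
    moreover have "L 0 = 0" and "H 0 = 0"
      using L[of 0 0] H[of 0 0] by simp_all
    ultimately have "?P z = ?P 0"
      by simp
    then show "z = 0"
      by (rule injD[OF bij_is_inj[OF \<open>bij ?P\<close>]])
  qed
  moreover have "Q ` range L = range L"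
  proof -
    have "Q ` range L = L ` range ?P"
      by (simp only: image_image semiconj)
    then show ?thesis
      using bij_is_surj[OF \<open>bij ?P\<close>] by simp
  qed
  then have "bij_betw Q (range L) (range L)"
    by (simp add: bij_betw_def eq_card_imp_inj_on)
  ultimately show "?kernel \<and> bij_betw Q (range L) (range L)" ..
next
  assume "?kernel \<and> bij_betw Q (range L) (range L)"
  then have kernel: ?kernel and Q_inj: "inj_on Q (range L)"
    unfolding bij_betw_def by blast+
  have "inj ?P"
  proof (rule injI)
    fix x y
    assume P_eq: "?P x = ?P y"
    have "Q (L x) = L (?P x)"
      by (rule semiconj[symmetric])
    also have "\<dots> = Q (L y)"
      by (simp only: P_eq semiconj)
    finally have "L x = L y"
      by (rule inj_onD[OF Q_inj]) simp_all
    moreover from this have "H x = H y"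
      using P_eq k[of x] by simp
    ultimately have "L (x - y) = 0 \<and> H (x - y) = 0"
      by (simp add: L H)
    then show "x = y"
      using kernel by (metis eq_iff_diff_eq_0)
  qed
  then show "bij ?P"
    by (simp add: bij_def finite_UNIV_inj_surj)
qed

theorem theorem2p5:
  fixes q n :: nat and g h f k :: "'a::{field_gcd,finite} poly"
  assumes "prime_power q" and "n > 0"
    and "card (UNIV :: 'a set) = q ^ n"
    and "poly_over (subfield_q q) g" and "poly_over (subfield_q q) h"
    and "lead_coeff g = 1" and "g dvd (monom 1 n - 1)"
    and "\<forall>c. poly k (lin_assoc q g c) \<in> subfield_q q - {0}"
  shows "perm_poly (\<lambda>c. poly f (lin_assoc q g c) + poly k (lin_assoc q g c) * lin_assoc q h c)
    \<longleftrightarrow> (gcd g h = 1 \<and>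
         bij_betw (\<lambda>c. lin_assoc q g (poly f c) + poly k c * lin_assoc q h c)
                  (range (lin_assoc q g)) (range (lin_assoc q g)))"
proof -
  obtain m where "m > 0" and q: "q = CHAR('a) ^ m"
    using prime_power_card_imp_power_of_CHAR[OF assms(1,3)] by blast
  note additive = lin_assoc_diff_arg[OF prime_CHAR_finite_field q]
  have k_fixed: "poly k (lin_assoc q g c) ^ q = poly k (lin_assoc q g c)"
    and k_nonzero: "poly k (lin_assoc q g c) \<noteq> 0" for c
    using assms(8) by (auto simp: subfield_q_def)
  have semiconj: "lin_assoc q g (poly f (lin_assoc q g c) + poly k (lin_assoc q g c) * lin_assoc q h c)
      = lin_assoc q g (poly f (lin_assoc q g c))
        + poly k (lin_assoc q g c) * lin_assoc q h (lin_assoc q g c)" for c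
    by (simp add: lin_assoc_add_arg[OF prime_CHAR_finite_field q] lin_assoc_mult_fixed_arg[OF k_fixed]
        lin_assoc_commute[OF q assms(4,5)])
  show ?thesis
    unfolding perm_poly_def
    using bij_iff_trivial_common_kernel_and_bij_betw_range[OF additive additive k_nonzero semiconj]
      gcd_eq_1_iff_lin_assoc_no_common_root[OF q \<open>m > 0\<close> assms(3,2,4,5,7)]
    by simp
qed

end
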